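(* Let $f:\mathbb{R}^n_{>0}\to\mathbb{R}^n_{>0}$ be order-preserving and homogeneous. Suppose $f$ has an eigenvector $u\in\mathbb{R}^n_{>0}$ with $\|u\|=1$ and $f$ is differentiable at $u$. If $\mathcal{G}(f'(u))$ has a unique final class, then every eigenvector of $f$ in $\mathbb{R}^n_{>0}$ is a scalar multiple of $u$. If, in addition, this final class is primitive, then $\lim_{k\to\infty}f^k(x)/\|f^k(x)\|=u$ for all $x\in\mathbb{R}^n_{>0}$.
   Context: $\|\cdot\|$ is a norm on $\mathbb{R}^n$; entrywise order. Order-preserving: $x\le y\Rightarrow f(x)\le f(y)$; homogeneous: $f(tx)=tf(x)$ for $t>0$. $f'(u)$ is the Jacobian matrix (a nonnegative matrix). For a nonnegative $n\times n$ matrix $A=[a_{ij}]$, $\mathcal{G}(A)$ is the directed graph on $[n]=\{1,\dots,n\}$ with an arc $i\to j$ when $a_{ij}\neq0$. A final class is a strongly connected component with no arcs leaving it. A strongly connected component is primitive if there is $m\in\mathbb{N}$ such that every ordered pair of its vertices is joined by a path of length exactly $m$. *)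

theory Defs
  imports "HOL-Analysis.Analysis"
begin

definition pos_cone :: "(real^'n) set" where
  "pos_cone = {x. \<forall>i. 0 < x $ i}"

definition is_norm :: "(real^'n \<Rightarrow> real) \<Rightarrow> bool" where
  "is_norm N \<longleftrightarrow> (\<forall>x y. N (x + y) \<le> N x + N y) \<and> (\<forall>c x. N (c *\<^sub>R x) = \<bar>c\<bar> * N x)
      \<and> (\<forall>x. N x = 0 \<longleftrightarrow> x = 0)"

definition arcs :: "real^'n^'n \<Rightarrow> ('n \<times> 'n) set" where
  "arcs A = {(i, j). A $ i $ j \<noteq> 0}"

definition scc :: "real^'n^'n \<Rightarrow> 'n set \<Rightarrow> bool" where
  "scc A C \<longleftrightarrow> (\<exists>i. C = {j. (i, j) \<in> (arcs A)\<^sup>* \<and> (j, i) \<in> (arcs A)\<^sup>*})"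

definition final_class :: "real^'n^'n \<Rightarrow> 'n set \<Rightarrow> bool" where
  "final_class A C \<longleftrightarrow> scc A C \<and> (\<forall>i\<in>C. \<forall>j. (i, j) \<in> arcs A \<longrightarrow> j \<in> C)"

definition primitive_class :: "real^'n^'n \<Rightarrow> 'n set \<Rightarrow> bool" where
  "primitive_class A C \<longleftrightarrow> (\<exists>m::nat. m \<ge> 1 \<and> (\<forall>i\<in>C. \<forall>j\<in>C. (i, j) \<in> (arcs A) ^^ m))"

end

theory Submission
  imports Defs
begin

(*
  Compare w in the open cone with the eigenvector u through the ratios
  M(w) = max_k w_k / u_k and m(w) = min_k w_k / u_k, so that m(w) u <= w <= M(w) u.
  Monotonicity and homogeneity give M(f w) <= r M(w) and m(f w) >= r m(w).

  The local ingredient is a touching lemma: if w <= beta u and f(w)_i = beta f(u)_i, and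
  there is an arc i -> j in G(f'(u)), i.e. df_i/dx_j (u) > 0, then w_j = beta u_j, since
  otherwise w <= beta (u - h e_j) for small h > 0 and f(u - h e_j)_i < f(u)_i.
  Thus the coordinates where an eigenvector v touches M(v) u, and those where it touches
  m(v) u, form arc-closed sets; each contains a final class, so by uniqueness they meet
  and M(v) = m(v).

  For convergence, iterate g = f / r, which fixes u. Along an orbit M decreases and m
  increases, to limits M* and m*; by continuity of g and of M, m, a limit point y of the
  orbit has M(g^k y) = M* and m(g^k y) = m* for all k. Primitivity of the unique final
  class yields a vertex j reached from every vertex by a path of length exactly K;
  propagating the touching of g^K y back along such paths gives y_j = M* u_j = m* u_j,
  hence M* = m* and g^k x tends to a multiple of u.
*)

lemma tendsto_Max_image:
  fixes F :: "'a \<Rightarrow> 'i \<Rightarrow> 'b::linorder_topology"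
  assumes "finite I" "I \<noteq> {}" "\<And>i. i \<in> I \<Longrightarrow> ((\<lambda>x. F x i) \<longlongrightarrow> L i) G"
  shows "((\<lambda>x. Max (F x ` I)) \<longlongrightarrow> Max (L ` I)) G"
  using assms by (induction I rule: finite_ne_induct) (auto intro!: tendsto_max)

lemma tendsto_Min_image:
  fixes F :: "'a \<Rightarrow> 'i \<Rightarrow> 'b::linorder_topology"
  assumes "finite I" "I \<noteq> {}" "\<And>i. i \<in> I \<Longrightarrow> ((\<lambda>x. F x i) \<longlongrightarrow> L i) G"
  shows "((\<lambda>x. Min (F x ` I)) \<longlongrightarrow> Min (L ` I)) G"
  using assms by (induction I rule: finite_ne_induct) (auto intro!: tendsto_min)

section \<open>Ratios against a positive vector\<close>

lemma pos_coneD: "u \<in> pos_cone \<Longrightarrow> 0 < u $ k"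
  by (simp add: pos_cone_def)

lemma pos_cone_scaleR: "x \<in> pos_cone \<Longrightarrow> 0 < t \<Longrightarrow> t *\<^sub>R x \<in> pos_cone"
  by (simp add: pos_cone_def)

definition max_ratio :: "real^'n \<Rightarrow> real^'n \<Rightarrow> real" where
  "max_ratio u w = Max (range (\<lambda>k. w $ k / u $ k))"

definition min_ratio :: "real^'n \<Rightarrow> real^'n \<Rightarrow> real" where
  "min_ratio u w = Min (range (\<lambda>k. w $ k / u $ k))"

lemma max_ratio_attained:
  assumes "u \<in> pos_cone" obtains k where "w $ k = max_ratio u w * u $ k"
proof -
  have "max_ratio u w \<in> range (\<lambda>k. w $ k / u $ k)"
    unfolding max_ratio_def by (rule Max_in) auto
  then obtain k where "max_ratio u w = w $ k / u $ k" by blast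
  with pos_coneD[OF assms, of k] show thesis by (intro that[of k]) simp
qed

lemma min_ratio_attained:
  assumes "u \<in> pos_cone" obtains k where "w $ k = min_ratio u w * u $ k"
proof -
  have "min_ratio u w \<in> range (\<lambda>k. w $ k / u $ k)"
    unfolding min_ratio_def by (rule Min_in) auto
  then obtain k where "min_ratio u w = w $ k / u $ k" by blast
  with pos_coneD[OF assms, of k] show thesis by (intro that[of k]) simp
qed

lemma le_max_ratio:
  assumes "u \<in> pos_cone" shows "w \<le> max_ratio u w *\<^sub>R u"
proof (unfold less_eq_vec_def, intro allI)
  fix k
  have "w $ k / u $ k \<le> max_ratio u w" unfolding max_ratio_def by (rule Max_ge) auto
  with pos_coneD[OF assms, of k] show "w $ k \<le> (max_ratio u w *\<^sub>R u) $ k"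
    by (simp add: divide_le_eq)
qed

lemma min_ratio_le:
  assumes "u \<in> pos_cone" shows "min_ratio u w *\<^sub>R u \<le> w"
proof (unfold less_eq_vec_def, intro allI)
  fix k
  have "min_ratio u w \<le> w $ k / u $ k" unfolding min_ratio_def by (rule Min_le) auto
  with pos_coneD[OF assms, of k] show "(min_ratio u w *\<^sub>R u) $ k \<le> w $ k"
    by (simp add: le_divide_eq)
qed

lemma max_ratio_le:
  assumes "u \<in> pos_cone" "w \<le> \<beta> *\<^sub>R u" shows "max_ratio u w \<le> \<beta>"
proof -
  obtain k where "w $ k = max_ratio u w * u $ k" using max_ratio_attained[OF assms(1)] .
  moreover have "w $ k \<le> \<beta> * u $ k" using assms(2) by (simp add: less_eq_vec_def)
  ultimately show ?thesis using pos_coneD[OF assms(1), of k] by simp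
qed

lemma min_ratio_ge:
  assumes "u \<in> pos_cone" "\<alpha> *\<^sub>R u \<le> w" shows "\<alpha> \<le> min_ratio u w"
proof -
  obtain k where "w $ k = min_ratio u w * u $ k" using min_ratio_attained[OF assms(1)] .
  moreover have "\<alpha> * u $ k \<le> w $ k" using assms(2) by (simp add: less_eq_vec_def)
  ultimately show ?thesis using pos_coneD[OF assms(1), of k] by simp
qed

lemma min_ratio_le_max_ratio: "min_ratio u w \<le> max_ratio u w"
  unfolding min_ratio_def max_ratio_def by (rule order_trans[OF Min_le Max_ge]) auto

lemma min_ratio_pos: "u \<in> pos_cone \<Longrightarrow> w \<in> pos_cone \<Longrightarrow> 0 < min_ratio u w"
  unfolding min_ratio_def pos_cone_def by (subst Min_gr_iff) auto

lemma max_ratio_pos: "u \<in> pos_cone \<Longrightarrow> w \<in> pos_cone \<Longrightarrow> 0 < max_ratio u w"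
  using min_ratio_pos min_ratio_le_max_ratio by (rule less_le_trans)

lemma ratio_self: "u \<in> pos_cone \<Longrightarrow> (\<lambda>k. u $ k / u $ k) = (\<lambda>_. 1)"
  by (intro ext) (simp add: pos_coneD less_imp_neq[symmetric])

lemma max_ratio_self:
  assumes "u \<in> pos_cone" shows "max_ratio u u = 1"
  unfolding max_ratio_def ratio_self[OF assms] by simp

lemma min_ratio_self:
  assumes "u \<in> pos_cone" shows "min_ratio u u = 1"
  unfolding min_ratio_def ratio_self[OF assms] by simp

lemma max_ratio_scaleR: "0 \<le> c \<Longrightarrow> max_ratio u (c *\<^sub>R w) = c * max_ratio u w"
  unfolding max_ratio_def
  by (subst mono_Max_commute[where f = "(*) c"]) (auto simp: mono_def mult_left_mono image_image)

lemma min_ratio_scaleR: "0 \<le> c \<Longrightarrow> min_ratio u (c *\<^sub>R w) = c * min_ratio u w"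
  unfolding min_ratio_def
  by (subst mono_Min_commute[where f = "(*) c"]) (auto simp: mono_def mult_left_mono image_image)

lemma tendsto_max_ratio: "(X \<longlongrightarrow> w) G \<Longrightarrow> ((\<lambda>x. max_ratio u (X x)) \<longlongrightarrow> max_ratio u w) G"
  unfolding max_ratio_def divide_inverse by (intro tendsto_Max_image tendsto_intros) auto

lemma tendsto_min_ratio: "(X \<longlongrightarrow> w) G \<Longrightarrow> ((\<lambda>x. min_ratio u (X x)) \<longlongrightarrow> min_ratio u w) G"
  unfolding min_ratio_def divide_inverse by (intro tendsto_Min_image tendsto_intros) auto

lemma tendsto_squeeze_ratios:
  assumes u: "u \<in> pos_cone"
    and "(\<lambda>k. max_ratio u (X k)) \<longlonglongrightarrow> c" "(\<lambda>k. min_ratio u (X k)) \<longlonglongrightarrow> c"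
  shows "X \<longlonglongrightarrow> c *\<^sub>R u"
proof (rule vec_tendstoI)
  fix i
  have "min_ratio u (X k) * u $ i \<le> X k $ i" "X k $ i \<le> max_ratio u (X k) * u $ i" for k
    using min_ratio_le[OF u] le_max_ratio[OF u] by (simp_all add: less_eq_vec_def)
  moreover have "(\<lambda>k. min_ratio u (X k) * u $ i) \<longlonglongrightarrow> c * u $ i"
    "(\<lambda>k. max_ratio u (X k) * u $ i) \<longlonglongrightarrow> c * u $ i"
    using assms(2,3) by (auto intro!: tendsto_intros)
  ultimately show "(\<lambda>k. X k $ i) \<longlonglongrightarrow> (c *\<^sub>R u) $ i"
    by (simp add: tendsto_sandwich[of "\<lambda>k. min_ratio u (X k) * u $ i" _ _
          "\<lambda>k. max_ratio u (X k) * u $ i"])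
qed

lemma is_norm_convex:
  assumes "is_norm N" shows "convex_on UNIV N"
proof (rule convex_onI)
  fix t :: real and x y assume t: "0 < t" "t < 1"
  have "N ((1 - t) *\<^sub>R x + t *\<^sub>R y) \<le> N ((1 - t) *\<^sub>R x) + N (t *\<^sub>R y)"
    using assms unfolding is_norm_def by blast
  also have "\<dots> = (1 - t) * N x + t * N y"
    using assms t by (simp add: is_norm_def)
  finally show "N ((1 - t) *\<^sub>R x + t *\<^sub>R y) \<le> (1 - t) * N x + t * N y" .
qed simp

lemma is_norm_continuous: "is_norm N \<Longrightarrow> continuous_on UNIV N"
  by (rule convex_on_continuous) (simp_all add: is_norm_convex)

lemma is_norm_normalize_scaleR:
  assumes "is_norm N" "0 < t" shows "(1 / N (t *\<^sub>R x)) *\<^sub>R (t *\<^sub>R x) = (1 / N x) *\<^sub>R x"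
  using assms by (simp add: is_norm_def)

lemma tendsto_normalize:
  assumes N: "is_norm N" "N u = 1" and lim: "X \<longlonglongrightarrow> c *\<^sub>R u" and c: "0 < c"
  shows "(\<lambda>k. (1 / N (X k)) *\<^sub>R X k) \<longlonglongrightarrow> u"
proof -
  have Nc: "N (c *\<^sub>R u) = c" using N c by (simp add: is_norm_def)
  have "(\<lambda>k. N (X k)) \<longlonglongrightarrow> c"
    using continuous_on_tendsto_compose[OF is_norm_continuous[OF N(1)] lim] Nc by simp
  then have "(\<lambda>k. (1 / N (X k)) *\<^sub>R X k) \<longlonglongrightarrow> (1 / c) *\<^sub>R (c *\<^sub>R u)"
    using c by (intro tendsto_intros lim) auto
  with c show ?thesis by simp
qed

section \<open>Final classes\<close>

lemma final_class_closed: "final_class A C \<Longrightarrow> arcs A `` C \<subseteq> C"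
  unfolding final_class_def by blast

lemma final_class_nonempty: "final_class A C \<Longrightarrow> C \<noteq> {}"
  unfolding final_class_def scc_def by blast

lemma final_class_subset:
  assumes "i \<in> S" "arcs A `` S \<subseteq> S"
  obtains C where "final_class A C" "C \<subseteq> S"
proof -
  define R where "R a = (arcs A)\<^sup>* `` {a}" for a
  obtain a where a: "a \<in> S" "\<And>b. b \<in> S \<Longrightarrow> card (R a) \<le> card (R b)"
    using ex_has_least_nat[of "\<lambda>i. i \<in> S" i "\<lambda>i. card (R i)"] assms(1) by blast
  have RS: "R a \<subseteq> S"
    using Image_closed_trancl[OF assms(2)] a(1) by (auto simp: R_def)
  have returns: "(b, a) \<in> (arcs A)\<^sup>*" if ab: "(a, b) \<in> (arcs A)\<^sup>*" for b
  proof -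
    have sub: "R b \<subseteq> R a" using ab by (auto simp: R_def)
    moreover have "card (R a) \<le> card (R b)" using a(2) RS ab by (auto simp: R_def)
    ultimately have "R b = R a" by (intro card_seteq) simp_all
    then show ?thesis by (auto simp: R_def)
  qed
  have "final_class A (R a)"
    unfolding final_class_def scc_def
  proof
    show "\<exists>i. R a = {j. (i, j) \<in> (arcs A)\<^sup>* \<and> (j, i) \<in> (arcs A)\<^sup>*}"
      using returns by (auto simp: R_def)
    show "\<forall>i\<in>R a. \<forall>j. (i, j) \<in> arcs A \<longrightarrow> j \<in> R a"
      by (auto simp: R_def intro: rtrancl_into_rtrancl)
  qed
  with RS show thesis using that by blast
qed

lemma unique_final_class_closed_sets_meet:
  assumes "\<exists>!C. final_class A C"
    and "i \<in> S" "arcs A `` S \<subseteq> S" and "j \<in> T" "arcs A `` T \<subseteq> T"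
  shows "S \<inter> T \<noteq> {}"
proof -
  obtain C where C: "final_class A C" "C \<subseteq> S" using final_class_subset[OF assms(2,3)] .
  obtain C' where C': "final_class A C'" "C' \<subseteq> T" using final_class_subset[OF assms(4,5)] .
  have "C = C'" using assms(1) C(1) C'(1) by blast
  with C C' final_class_nonempty show ?thesis by blast
qed

lemma primitive_final_class_relpow:
  assumes final: "final_class A C" and prim: "primitive_class A C"
  obtains m where "\<And>k a b. m \<le> k \<Longrightarrow> a \<in> C \<Longrightarrow> b \<in> C \<Longrightarrow> (a, b) \<in> arcs A ^^ k"
proof -
  obtain m where m: "1 \<le> m" "\<And>a b. a \<in> C \<Longrightarrow> b \<in> C \<Longrightarrow> (a, b) \<in> arcs A ^^ m"
    using prim unfolding primitive_class_def by blast
  have "\<forall>a\<in>C. \<forall>b\<in>C. (a, b) \<in> arcs A ^^ k" if "m \<le> k" for k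
    using that
  proof (induction k rule: dec_induct)
    case base then show ?case using m(2) by blast
  next
    case (step k)
    show ?case
    proof (intro ballI)
      fix a b assume ab: "a \<in> C" "b \<in> C"
      obtain m' where "m = Suc m'" using m(1) by (cases m) auto
      with m(2)[OF ab(1) ab(1)] have "(a, a) \<in> arcs A ^^ Suc m'" by simp
      then obtain a' where a': "(a, a') \<in> arcs A" by (blast dest: relpow_Suc_D2)
      then have "a' \<in> C" using final_class_closed[OF final] ab(1) by blast
      with a' step.IH ab(2) show "(a, b) \<in> arcs A ^^ Suc k" by (blast intro: relpow_Suc_I2)
    qed
  qed
  then show thesis using that by blast
qed

lemma unique_primitive_final_class_common_target:
  assumes unique: "\<exists>!C. final_class A C" and prim: "\<forall>C. final_class A C \<longrightarrow> primitive_class A C"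
  obtains j K where "\<And>i. (i, j) \<in> arcs A ^^ K"
proof -
  obtain F where F: "final_class A F" using unique by blast
  obtain m where m: "\<And>k a b. m \<le> k \<Longrightarrow> a \<in> F \<Longrightarrow> b \<in> F \<Longrightarrow> (a, b) \<in> arcs A ^^ k"
    using primitive_final_class_relpow[OF F] prim F by blast
  obtain j where j: "j \<in> F" using final_class_nonempty[OF F] by blast
  have "\<exists>l. (i, j) \<in> arcs A ^^ l" for i
  proof -
    have "arcs A `` ((arcs A)\<^sup>* `` {i}) \<subseteq> (arcs A)\<^sup>* `` {i}"
      by (auto intro: rtrancl_into_rtrancl)
    then obtain C where "final_class A C" "C \<subseteq> (arcs A)\<^sup>* `` {i}"
      using final_class_subset[of i "(arcs A)\<^sup>* `` {i}" A] by blast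
    then have "(i, j) \<in> (arcs A)\<^sup>*" using unique F j by blast
    then show ?thesis by (simp add: rtrancl_power)
  qed
  then obtain l where l: "\<And>i. (i, j) \<in> arcs A ^^ l i" by metis
  define K where "K = (\<Sum>i\<in>UNIV. l i) + m"
  have "(i, j) \<in> arcs A ^^ K" for i
  proof -
    have li: "l i \<le> (\<Sum>i\<in>UNIV. l i)" by (rule member_le_sum) simp_all
    then have "(j, j) \<in> arcs A ^^ (K - l i)" using m j by (simp add: K_def)
    with l have "(i, j) \<in> arcs A ^^ (l i + (K - l i))" by (auto simp: relpow_add)
    with li show ?thesis by (simp add: K_def)
  qed
  then show thesis by (rule that)
qed

section \<open>Order-preserving homogeneous maps of the open cone\<close>

lemma has_real_derivative_partial:
  fixes f :: "real^'n \<Rightarrow> real^'m"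
  assumes "(f has_derivative D) (at u)"
  shows "((\<lambda>t. f (u + t *\<^sub>R axis j 1) $ i) has_real_derivative matrix D $ i $ j) (at 0)"
proof -
  have line: "((\<lambda>t::real. u + t *\<^sub>R axis j 1) has_derivative (\<lambda>t. t *\<^sub>R axis j 1)) (at 0)"
    by (auto intro!: derivative_eq_intros)
  have "((\<lambda>t. f (u + t *\<^sub>R axis j 1)) has_derivative (\<lambda>t. D (t *\<^sub>R axis j 1))) (at 0)"
    using has_derivative_compose[OF line] assms by simp
  then have "((\<lambda>t. f (u + t *\<^sub>R axis j 1) $ i) has_derivative (\<lambda>t. D (t *\<^sub>R axis j 1) $ i)) (at 0)"
    by (rule bounded_linear.has_derivative[OF bounded_linear_vec_nth])
  moreover have "D (t *\<^sub>R axis j 1) $ i = matrix D $ i $ j * t" for t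
    using has_derivative_linear[OF assms] by (simp add: linear_scale matrix_def)
  ultimately show ?thesis by (simp add: has_field_derivative_def mult_commute_abs)
qed

lemma arcs_matrix_scaleR:
  "c \<noteq> 0 \<Longrightarrow> arcs (matrix (\<lambda>x. c *\<^sub>R D x)) = arcs (matrix D)"
  by (simp add: arcs_def matrix_def)

locale order_preserving_homogeneous =
  fixes f :: "real^'n \<Rightarrow> real^'n"
  assumes maps_cone: "x \<in> pos_cone \<Longrightarrow> f x \<in> pos_cone"
    and mono: "x \<in> pos_cone \<Longrightarrow> y \<in> pos_cone \<Longrightarrow> x \<le> y \<Longrightarrow> f x \<le> f y"
    and homogeneous: "x \<in> pos_cone \<Longrightarrow> 0 < t \<Longrightarrow> f (t *\<^sub>R x) = t *\<^sub>R f x"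
begin

lemma scaleR_map: "0 < c \<Longrightarrow> order_preserving_homogeneous (\<lambda>x. c *\<^sub>R f x)"
proof
  fix x y :: "real^'n" assume "x \<in> pos_cone" "y \<in> pos_cone" "x \<le> y" "0 < c"
  then show "c *\<^sub>R f x \<le> c *\<^sub>R f y"
    using mono by (simp add: less_eq_vec_def)
qed (simp_all add: maps_cone homogeneous pos_cone_scaleR)

lemma funpow_in_cone: "x \<in> pos_cone \<Longrightarrow> (f ^^ k) x \<in> pos_cone"
  by (induction k) (auto simp: maps_cone)

lemma funpow_scaleR:
  assumes "0 < c" "x \<in> pos_cone" shows "((\<lambda>x. c *\<^sub>R f x) ^^ k) x = c ^ k *\<^sub>R (f ^^ k) x"
  by (induction k) (simp_all add: assms homogeneous funpow_in_cone)

lemma eigenvalue_pos: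
  assumes "u \<in> pos_cone" "f u = r *\<^sub>R u" shows "0 < r"
proof -
  have "0 < r * u $ i" for i using pos_coneD[OF maps_cone[OF assms(1)], of i] assms(2) by simp
  with pos_coneD[OF assms(1)] show ?thesis by (meson zero_less_mult_pos2)
qed

lemma max_ratio_image_le:
  assumes u: "u \<in> pos_cone" and eig: "f u = r *\<^sub>R u" and w: "w \<in> pos_cone"
  shows "max_ratio u (f w) \<le> r * max_ratio u w"
proof -
  have \<beta>: "0 < max_ratio u w" using max_ratio_pos[OF u w] .
  have "f w \<le> f (max_ratio u w *\<^sub>R u)"
    using mono[OF w pos_cone_scaleR[OF u \<beta>] le_max_ratio[OF u]] .
  also have "\<dots> = (r * max_ratio u w) *\<^sub>R u" using homogeneous[OF u \<beta>] eig by simp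
  finally show ?thesis by (rule max_ratio_le[OF u])
qed

lemma min_ratio_image_ge:
  assumes u: "u \<in> pos_cone" and eig: "f u = r *\<^sub>R u" and w: "w \<in> pos_cone"
  shows "r * min_ratio u w \<le> min_ratio u (f w)"
proof -
  have \<alpha>: "0 < min_ratio u w" using min_ratio_pos[OF u w] .
  have "(r * min_ratio u w) *\<^sub>R u = f (min_ratio u w *\<^sub>R u)"
    using homogeneous[OF u \<alpha>] eig by simp
  also have "\<dots> \<le> f w"
    using mono[OF pos_cone_scaleR[OF u \<alpha>] w min_ratio_le[OF u]] .
  finally show ?thesis by (rule min_ratio_ge[OF u])
qed

lemma eigenvalue_unique:
  assumes u: "u \<in> pos_cone" "f u = r *\<^sub>R u" and v: "v \<in> pos_cone" "f v = \<mu> *\<^sub>R v"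
  shows "\<mu> = r"
proof -
  have \<mu>: "0 \<le> \<mu>" using eigenvalue_pos[OF v] by simp
  have "\<mu> * max_ratio u v \<le> r * max_ratio u v"
    using max_ratio_image_le[OF u v(1)] by (simp add: v(2) max_ratio_scaleR[OF \<mu>])
  moreover have "r * min_ratio u v \<le> \<mu> * min_ratio u v"
    using min_ratio_image_ge[OF u v(1)] by (simp add: v(2) min_ratio_scaleR[OF \<mu>])
  ultimately show ?thesis
    using max_ratio_pos[OF u(1) v(1)] min_ratio_pos[OF u(1) v(1)] by simp
qed

lemma partial_derivative_nonneg:
  assumes u: "u \<in> pos_cone" and D: "(f has_derivative D) (at u)"
  shows "0 \<le> matrix D $ i $ j"
proof (rule ccontr)
  assume "\<not> 0 \<le> matrix D $ i $ j"
  then obtain d where "0 < d" "\<forall>h>0. h < d \<longrightarrow>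
      f (u + (0 + h) *\<^sub>R axis j 1) $ i < f (u + 0 *\<^sub>R axis j 1) $ i"
    using DERIV_neg_dec_right[OF has_real_derivative_partial[OF D]] by (meson not_le)
  then have d: "0 < d" "f (u + (d / 2) *\<^sub>R axis j 1) $ i < f u $ i" by simp_all
  have p: "u + (d / 2) *\<^sub>R axis j 1 \<in> pos_cone"
    using u d(1) by (auto simp: pos_cone_def axis_def add_pos_nonneg)
  have "u \<le> u + (d / 2) *\<^sub>R axis j 1"
    using d(1) by (simp add: less_eq_vec_def axis_def)
  then have "f u \<le> f (u + (d / 2) *\<^sub>R axis j 1)" by (rule mono[OF u p])
  with d(2) show False by (simp add: less_eq_vec_def not_le[symmetric])
qed

lemma arc_imp_partial_derivative_pos:
  "u \<in> pos_cone \<Longrightarrow> (f has_derivative D) (at u) \<Longrightarrow> (i, j) \<in> arcs (matrix D) \<Longrightarrow>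
    0 < matrix D $ i $ j"
  using partial_derivative_nonneg by (auto simp: arcs_def order_le_less)

lemma touching_upper:
  assumes u: "u \<in> pos_cone" and D: "(f has_derivative D) (at u)" and arc: "(i, j) \<in> arcs (matrix D)"
    and z: "z \<in> pos_cone" and \<beta>: "0 < \<beta>" "z \<le> \<beta> *\<^sub>R u" and touch: "\<beta> * f u $ i \<le> f z $ i"
  shows "z $ j = \<beta> * u $ j"
proof (rule ccontr)
  assume "z $ j \<noteq> \<beta> * u $ j"
  moreover have "z $ j \<le> \<beta> * u $ j" using \<beta>(2) by (simp add: less_eq_vec_def)
  ultimately have gap: "0 < (\<beta> * u $ j - z $ j) / \<beta>" using \<beta>(1) by simp
  obtain d where "0 < d" "\<forall>h>0. h < d \<longrightarrow>
      f (u + (0 - h) *\<^sub>R axis j 1) $ i < f (u + 0 *\<^sub>R axis j 1) $ i"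
    using DERIV_pos_inc_left[OF has_real_derivative_partial[OF D]
        arc_imp_partial_derivative_pos[OF u D arc]] by blast
  moreover define h where "h = min d (min (u $ j) ((\<beta> * u $ j - z $ j) / \<beta>)) / 2"
  moreover define p where "p = u - h *\<^sub>R axis j 1"
  ultimately have h: "0 < h" "h < u $ j" "h \<le> (\<beta> * u $ j - z $ j) / \<beta>" and fp: "f p $ i < f u $ i"
    using gap pos_coneD[OF u, of j] by auto
  have p: "p \<in> pos_cone" using u h(2) by (auto simp: pos_cone_def p_def axis_def)
  have "z \<le> \<beta> *\<^sub>R p"
    using \<beta> h(3) by (auto simp: less_eq_vec_def p_def axis_def field_simps)
  then have "f z \<le> \<beta> *\<^sub>R f p"
    using mono[OF z pos_cone_scaleR[OF p \<beta>(1)]] homogeneous[OF p \<beta>(1)] by simp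
  then have "f z $ i \<le> \<beta> * f p $ i" by (simp add: less_eq_vec_def)
  also have "\<dots> < \<beta> * f u $ i" using fp \<beta>(1) by simp
  finally show False using touch by simp
qed

lemma touching_lower:
  assumes u: "u \<in> pos_cone" and D: "(f has_derivative D) (at u)" and arc: "(i, j) \<in> arcs (matrix D)"
    and z: "z \<in> pos_cone" and \<alpha>: "0 < \<alpha>" "\<alpha> *\<^sub>R u \<le> z" and touch: "f z $ i \<le> \<alpha> * f u $ i"
  shows "z $ j = \<alpha> * u $ j"
proof (rule ccontr)
  assume "z $ j \<noteq> \<alpha> * u $ j"
  moreover have "\<alpha> * u $ j \<le> z $ j" using \<alpha>(2) by (simp add: less_eq_vec_def)
  ultimately have gap: "0 < (z $ j - \<alpha> * u $ j) / \<alpha>" using \<alpha>(1) by simp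
  obtain d where "0 < d" "\<forall>h>0. h < d \<longrightarrow>
      f (u + 0 *\<^sub>R axis j 1) $ i < f (u + (0 + h) *\<^sub>R axis j 1) $ i"
    using DERIV_pos_inc_right[OF has_real_derivative_partial[OF D]
        arc_imp_partial_derivative_pos[OF u D arc]] by blast
  moreover define h where "h = min d ((z $ j - \<alpha> * u $ j) / \<alpha>) / 2"
  moreover define p where "p = u + h *\<^sub>R axis j 1"
  ultimately have h: "0 < h" "h \<le> (z $ j - \<alpha> * u $ j) / \<alpha>" and fp: "f u $ i < f p $ i"
    using gap by auto
  have p: "p \<in> pos_cone" using u h(1) by (auto simp: pos_cone_def p_def axis_def add_pos_nonneg)
  have "\<alpha> *\<^sub>R p \<le> z"
    using \<alpha> h(2) by (auto simp: less_eq_vec_def p_def axis_def field_simps)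
  then have "\<alpha> *\<^sub>R f p \<le> f z"
    using mono[OF pos_cone_scaleR[OF p \<alpha>(1)] z] homogeneous[OF p \<alpha>(1)] by simp
  then have "\<alpha> * f p $ i \<le> f z $ i" by (simp add: less_eq_vec_def)
  moreover have "\<alpha> * f u $ i < \<alpha> * f p $ i" using fp \<alpha>(1) by simp
  ultimately show False using touch by simp
qed

lemma touching_upper_relpow:
  assumes u: "u \<in> pos_cone" and fixed: "f u = u" and D: "(f has_derivative D) (at u)"
    and "z \<in> pos_cone" "0 < \<beta>" "z \<le> \<beta> *\<^sub>R u" and "\<beta> * u $ i \<le> (f ^^ k) z $ i"
    and "(i, j) \<in> arcs (matrix D) ^^ k"
  shows "z $ j = \<beta> * u $ j"
  using assms(4-)
proof (induction k arbitrary: z j)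
  case 0
  then show ?case by (auto simp: less_eq_vec_def intro: antisym)
next
  case (Suc k)
  obtain i' where path: "(i, i') \<in> arcs (matrix D) ^^ k" "(i', j) \<in> arcs (matrix D)"
    using Suc.prems(5) by auto
  have "f z \<le> f (\<beta> *\<^sub>R u)"
    using mono[OF Suc.prems(1) pos_cone_scaleR[OF u Suc.prems(2)] Suc.prems(3)] .
  then have fz: "f z \<le> \<beta> *\<^sub>R u" using homogeneous[OF u Suc.prems(2)] fixed by simp
  have "f z $ i' = \<beta> * u $ i'"
    using Suc.IH[OF maps_cone[OF Suc.prems(1)] Suc.prems(2) fz _ path(1)] Suc.prems(4)
    by (simp add: funpow_swap1)
  then show ?case using touching_upper[OF u D path(2) Suc.prems(1-3)] fixed by simp
qed

lemma touching_lower_relpow: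
  assumes u: "u \<in> pos_cone" and fixed: "f u = u" and D: "(f has_derivative D) (at u)"
    and "z \<in> pos_cone" "0 < \<alpha>" "\<alpha> *\<^sub>R u \<le> z" and "(f ^^ k) z $ i \<le> \<alpha> * u $ i"
    and "(i, j) \<in> arcs (matrix D) ^^ k"
  shows "z $ j = \<alpha> * u $ j"
  using assms(4-)
proof (induction k arbitrary: z j)
  case 0
  then show ?case by (auto simp: less_eq_vec_def intro: antisym)
next
  case (Suc k)
  obtain i' where path: "(i, i') \<in> arcs (matrix D) ^^ k" "(i', j) \<in> arcs (matrix D)"
    using Suc.prems(5) by auto
  have "f (\<alpha> *\<^sub>R u) \<le> f z"
    using mono[OF pos_cone_scaleR[OF u Suc.prems(2)] Suc.prems(1) Suc.prems(3)] .
  then have fz: "\<alpha> *\<^sub>R u \<le> f z" using homogeneous[OF u Suc.prems(2)] fixed by simp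
  have "f z $ i' = \<alpha> * u $ i'"
    using Suc.IH[OF maps_cone[OF Suc.prems(1)] Suc.prems(2) fz _ path(1)] Suc.prems(4)
    by (simp add: funpow_swap1)
  then show ?case using touching_lower[OF u D path(2) Suc.prems(1-3)] fixed by simp
qed

lemma continuous_on_cone: "continuous_on pos_cone f"
proof (rule continuous_on_sequentiallyI)
  fix X :: "nat \<Rightarrow> real^'n" and y assume X: "\<forall>k. X k \<in> pos_cone" and y: "y \<in> pos_cone"
    and lim: "X \<longlonglongrightarrow> y"
  have lower: "min_ratio y (X k) * f y $ i \<le> f (X k) $ i" for k i
  proof -
    have c: "0 < min_ratio y (X k)" using min_ratio_pos[OF y] X by blast
    have "f (min_ratio y (X k) *\<^sub>R y) \<le> f (X k)"
      using mono[OF pos_cone_scaleR[OF y c]] X min_ratio_le[OF y] by blast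
    then show ?thesis using homogeneous[OF y c] by (simp add: less_eq_vec_def)
  qed
  have upper: "f (X k) $ i \<le> max_ratio y (X k) * f y $ i" for k i
  proof -
    have c: "0 < max_ratio y (X k)" using max_ratio_pos[OF y] X by blast
    have "f (X k) \<le> f (max_ratio y (X k) *\<^sub>R y)"
      using mono[OF _ pos_cone_scaleR[OF y c]] X le_max_ratio[OF y] by blast
    then show ?thesis using homogeneous[OF y c] by (simp add: less_eq_vec_def)
  qed
  show "(\<lambda>k. f (X k)) \<longlonglongrightarrow> f y"
  proof (rule vec_tendstoI)
    fix i
    have "(\<lambda>k. min_ratio y (X k) * f y $ i) \<longlonglongrightarrow> min_ratio y y * f y $ i"
      by (intro tendsto_intros tendsto_min_ratio lim)
    then have lo: "(\<lambda>k. min_ratio y (X k) * f y $ i) \<longlonglongrightarrow> f y $ i"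
      by (simp add: min_ratio_self[OF y])
    have "(\<lambda>k. max_ratio y (X k) * f y $ i) \<longlonglongrightarrow> max_ratio y y * f y $ i"
      by (intro tendsto_intros tendsto_max_ratio lim)
    then have up: "(\<lambda>k. max_ratio y (X k) * f y $ i) \<longlonglongrightarrow> f y $ i"
      by (simp add: max_ratio_self[OF y])
    show "(\<lambda>k. f (X k) $ i) \<longlonglongrightarrow> f y $ i"
      by (rule tendsto_sandwich[OF _ _ lo up]) (simp_all add: lower upper)
  qed
qed

lemma eigenvector_unique:
  assumes u: "u \<in> pos_cone" "f u = r *\<^sub>R u" and D: "(f has_derivative D) (at u)"
    and unique: "\<exists>!C. final_class (matrix D) C" and v: "v \<in> pos_cone" "f v = \<mu> *\<^sub>R v"
  shows "v = max_ratio u v *\<^sub>R u"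
proof -
  have fv: "f v = r *\<^sub>R v" using eigenvalue_unique[OF u v] v(2) by simp
  define \<beta> where "\<beta> = max_ratio u v"
  define \<alpha> where "\<alpha> = min_ratio u v"
  have \<beta>: "0 < \<beta>" "v \<le> \<beta> *\<^sub>R u"
    using max_ratio_pos[OF u(1) v(1)] le_max_ratio[OF u(1)] by (simp_all add: \<beta>_def)
  have \<alpha>: "0 < \<alpha>" "\<alpha> *\<^sub>R u \<le> v"
    using min_ratio_pos[OF u(1) v(1)] min_ratio_le[OF u(1)] by (simp_all add: \<alpha>_def)
  define J where "J = {k. v $ k = \<beta> * u $ k}"
  define L where "L = {k. v $ k = \<alpha> * u $ k}"
  have "arcs (matrix D) `` J \<subseteq> J"
  proof
    fix j assume "j \<in> arcs (matrix D) `` J"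
    then obtain i where "i \<in> J" "(i, j) \<in> arcs (matrix D)" by blast
    with touching_upper[OF u(1) D _ v(1) \<beta>] show "j \<in> J" by (simp add: J_def fv u(2))
  qed
  moreover have "arcs (matrix D) `` L \<subseteq> L"
  proof
    fix j assume "j \<in> arcs (matrix D) `` L"
    then obtain i where "i \<in> L" "(i, j) \<in> arcs (matrix D)" by blast
    with touching_lower[OF u(1) D _ v(1) \<alpha>] show "j \<in> L" by (simp add: L_def fv u(2))
  qed
  moreover obtain a where "a \<in> J" using max_ratio_attained[OF u(1)] by (auto simp: J_def \<beta>_def)
  moreover obtain b where "b \<in> L" using min_ratio_attained[OF u(1)] by (auto simp: L_def \<alpha>_def)
  ultimately obtain k where "k \<in> J" "k \<in> L"
    using unique_final_class_closed_sets_meet[OF unique] by blast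
  then have "\<beta> = \<alpha>" using pos_coneD[OF u(1), of k] by (simp add: J_def L_def)
  with \<alpha>(2) \<beta>(2) show ?thesis by (simp add: \<beta>_def antisym)
qed

lemma decseq_max_ratio_funpow:
  assumes "u \<in> pos_cone" "f u = u" "x \<in> pos_cone"
  shows "decseq (\<lambda>k. max_ratio u ((f ^^ k) x))"
  using max_ratio_image_le[OF assms(1), of 1] assms funpow_in_cone by (intro decseq_SucI) simp

lemma incseq_min_ratio_funpow:
  assumes "u \<in> pos_cone" "f u = u" "x \<in> pos_cone"
  shows "incseq (\<lambda>k. min_ratio u ((f ^^ k) x))"
  using min_ratio_image_ge[OF assms(1), of 1] assms funpow_in_cone by (intro incseq_SucI) simp

lemma funpow_between_ratios:
  assumes u: "u \<in> pos_cone" "f u = u" and x: "x \<in> pos_cone"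
  shows "min_ratio u x *\<^sub>R u \<le> (f ^^ k) x" "(f ^^ k) x \<le> max_ratio u x *\<^sub>R u"
proof (induction k)
  case 0
  show "min_ratio u x *\<^sub>R u \<le> (f ^^ 0) x" "(f ^^ 0) x \<le> max_ratio u x *\<^sub>R u"
    using min_ratio_le[OF u(1)] le_max_ratio[OF u(1)] by simp_all
next
  case (Suc k)
  have \<alpha>: "0 < min_ratio u x" and \<beta>: "0 < max_ratio u x"
    using min_ratio_pos[OF u(1) x] max_ratio_pos[OF u(1) x] .
  have "f (min_ratio u x *\<^sub>R u) \<le> f ((f ^^ k) x)"
    by (rule mono[OF pos_cone_scaleR[OF u(1) \<alpha>] funpow_in_cone[OF x] Suc.IH(1)])
  moreover have "f ((f ^^ k) x) \<le> f (max_ratio u x *\<^sub>R u)"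
    by (rule mono[OF funpow_in_cone[OF x] pos_cone_scaleR[OF u(1) \<beta>] Suc.IH(2)])
  ultimately show "min_ratio u x *\<^sub>R u \<le> (f ^^ Suc k) x" "(f ^^ Suc k) x \<le> max_ratio u x *\<^sub>R u"
    using homogeneous[OF u(1) \<alpha>] homogeneous[OF u(1) \<beta>] u(2) by simp_all
qed

lemma limit_point_with_limit_ratios:
  assumes u: "u \<in> pos_cone" "f u = u" and x: "x \<in> pos_cone"
    and M: "(\<lambda>k. max_ratio u ((f ^^ k) x)) \<longlonglongrightarrow> Ms"
    and m: "(\<lambda>k. min_ratio u ((f ^^ k) x)) \<longlonglongrightarrow> ms"
  obtains y where "y \<in> pos_cone"
    "\<And>k. max_ratio u ((f ^^ k) y) = Ms" "\<And>k. min_ratio u ((f ^^ k) y) = ms"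
proof -
  have "range (\<lambda>k. (f ^^ k) x) \<subseteq> cbox (min_ratio u x *\<^sub>R u) (max_ratio u x *\<^sub>R u)"
    using funpow_between_ratios[OF u x] by (auto simp: interval_cbox_cart[symmetric])
  then have "bounded (range (\<lambda>k. (f ^^ k) x))" by (rule bounded_subset[OF bounded_cbox])
  then obtain \<sigma> y where \<sigma>: "strict_mono \<sigma>" and lim: "(\<lambda>j. (f ^^ \<sigma> j) x) \<longlonglongrightarrow> y"
    using bounded_imp_convergent_subsequence[of "\<lambda>k. (f ^^ k) x"] by (auto simp: o_def)
  have "min_ratio u x * u $ i \<le> y $ i" for i
    using funpow_between_ratios(1)[OF u x]
    by (intro LIMSEQ_le_const[OF tendsto_vec_nth[OF lim]]) (simp add: less_eq_vec_def)
  moreover have "0 < min_ratio u x * u $ i" for i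
    using min_ratio_pos[OF u(1) x] pos_coneD[OF u(1)] by simp
  ultimately have y: "y \<in> pos_cone" unfolding pos_cone_def by (blast intro: less_le_trans)
  have shifted: "(\<lambda>j. (f ^^ (k + \<sigma> j)) x) \<longlonglongrightarrow> (f ^^ k) y" for k
  proof (induction k)
    case 0
    then show ?case using lim by simp
  next
    case (Suc k)
    then show ?case
      using continuous_on_tendsto_compose[OF continuous_on_cone Suc funpow_in_cone[OF y]]
        funpow_in_cone[OF x] by simp
  qed
  have sub: "strict_mono (\<lambda>j. k + \<sigma> j)" for k using \<sigma> by (simp add: strict_mono_def)
  have "max_ratio u ((f ^^ k) y) = Ms" for k
    using LIMSEQ_unique[OF tendsto_max_ratio[OF shifted]
        LIMSEQ_subseq_LIMSEQ[OF M sub, unfolded o_def]] .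
  moreover have "min_ratio u ((f ^^ k) y) = ms" for k
    using LIMSEQ_unique[OF tendsto_min_ratio[OF shifted]
        LIMSEQ_subseq_LIMSEQ[OF m sub, unfolded o_def]] .
  ultimately show thesis using y that by blast
qed

lemma ratio_limits_funpow:
  assumes u: "u \<in> pos_cone" "f u = u" and x: "x \<in> pos_cone"
  obtains Ms ms where "(\<lambda>k. max_ratio u ((f ^^ k) x)) \<longlonglongrightarrow> Ms"
    "(\<lambda>k. min_ratio u ((f ^^ k) x)) \<longlonglongrightarrow> ms" "0 < ms" "ms \<le> Ms"
proof -
  define M where "M k = max_ratio u ((f ^^ k) x)" for k
  define m where "m k = min_ratio u ((f ^^ k) x)" for k
  have mM: "m k \<le> M k" for k by (simp add: m_def M_def min_ratio_le_max_ratio)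
  have "decseq M" "incseq m"
    using decseq_max_ratio_funpow[OF u x] incseq_min_ratio_funpow[OF u x]
    by (simp_all add: M_def[abs_def] m_def[abs_def])
  have m0M: "m 0 \<le> M k" for k using incseqD[OF \<open>incseq m\<close>, of 0 k] mM[of k] by simp
  have mM0: "m k \<le> M 0" for k using decseqD[OF \<open>decseq M\<close>, of 0 k] mM[of k] by simp
  obtain Ms where Ms: "M \<longlonglongrightarrow> Ms"
    using decseq_convergent[OF \<open>decseq M\<close>, of "m 0"] m0M by blast
  obtain ms where ms: "m \<longlonglongrightarrow> ms"
    using incseq_convergent[OF \<open>incseq m\<close>, of "M 0"] mM0 by blast
  have "m 0 \<le> ms"
    by (rule LIMSEQ_le_const[OF ms]) (use incseqD[OF \<open>incseq m\<close>] in blast)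
  then have "0 < ms" using min_ratio_pos[OF u(1) x] by (simp add: m_def)
  moreover have "ms \<le> Ms" using LIMSEQ_le[OF ms Ms] mM by blast
  ultimately show thesis using that Ms ms by (simp add: M_def[abs_def] m_def[abs_def])
qed

lemma funpow_tendsto_eigenvector:
  assumes u: "u \<in> pos_cone" "f u = u" and D: "(f has_derivative D) (at u)"
    and path: "\<And>i. (i, j) \<in> arcs (matrix D) ^^ K" and x: "x \<in> pos_cone"
  obtains c where "0 < c" "(\<lambda>k. (f ^^ k) x) \<longlonglongrightarrow> c *\<^sub>R u"
proof -
  obtain Ms ms where Ms: "(\<lambda>k. max_ratio u ((f ^^ k) x)) \<longlonglongrightarrow> Ms"
    and ms: "(\<lambda>k. min_ratio u ((f ^^ k) x)) \<longlonglongrightarrow> ms" and pos: "0 < ms" "ms \<le> Ms"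
    using ratio_limits_funpow[OF u x] .
  obtain y where y: "y \<in> pos_cone"
    "\<And>k. max_ratio u ((f ^^ k) y) = Ms" "\<And>k. min_ratio u ((f ^^ k) y) = ms"
    using limit_point_with_limit_ratios[OF u x Ms ms] by blast
  have "y \<le> Ms *\<^sub>R u" "ms *\<^sub>R u \<le> y"
    using le_max_ratio[OF u(1), of y] min_ratio_le[OF u(1), of y] y(2,3)[of 0] by simp_all
  obtain i where "(f ^^ K) y $ i = Ms * u $ i"
    by (rule max_ratio_attained[OF u(1), of "(f ^^ K) y", unfolded y(2)])
  then have "y $ j = Ms * u $ j"
    using pos by (intro touching_upper_relpow[OF u D y(1) _ \<open>y \<le> Ms *\<^sub>R u\<close> _ path[of i]]) simp_all
  moreover obtain i' where "(f ^^ K) y $ i' = ms * u $ i'"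
    by (rule min_ratio_attained[OF u(1), of "(f ^^ K) y", unfolded y(3)])
  then have "y $ j = ms * u $ j"
    by (intro touching_lower_relpow[OF u D y(1) pos(1) \<open>ms *\<^sub>R u \<le> y\<close> _ path[of i']]) simp
  ultimately have "ms = Ms" using pos_coneD[OF u(1), of j] by simp
  with Ms ms have "(\<lambda>k. (f ^^ k) x) \<longlonglongrightarrow> Ms *\<^sub>R u"
    by (intro tendsto_squeeze_ratios[OF u(1)]) simp_all
  moreover have "0 < Ms" using pos by simp
  ultimately show thesis by (rule that[rotated])
qed


lemma normalized_funpow_tendsto:
  assumes norm: "is_norm N" "N u = 1" and u: "u \<in> pos_cone" "f u = r *\<^sub>R u"
    and D: "(f has_derivative D) (at u)" and path: "\<And>i. (i, j) \<in> arcs (matrix D) ^^ K"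
    and x: "x \<in> pos_cone"
  shows "(\<lambda>k. (1 / N ((f ^^ k) x)) *\<^sub>R (f ^^ k) x) \<longlonglongrightarrow> u"
proof -
  have r: "0 < r" by (rule eigenvalue_pos[OF u])
  define g where "g y = (1 / r) *\<^sub>R f y" for y
  interpret g: order_preserving_homogeneous g
    unfolding g_def[abs_def] using r by (simp add: scaleR_map)
  have g_u: "g u = u" using r u(2) by (simp add: g_def)
  have g_deriv: "(g has_derivative (\<lambda>y. (1 / r) *\<^sub>R D y)) (at u)"
    unfolding g_def[abs_def] by (rule has_derivative_scaleR_right[OF D])
  have arcs_g: "arcs (matrix (\<lambda>y. (1 / r) *\<^sub>R D y)) = arcs (matrix D)"
    using r by (simp add: arcs_matrix_scaleR)
  obtain c where c: "0 < c" "(\<lambda>k. (g ^^ k) x) \<longlonglongrightarrow> c *\<^sub>R u"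
    by (rule g.funpow_tendsto_eigenvector[OF u(1) g_u g_deriv path[folded arcs_g] x])
  have "(1 / N ((g ^^ k) x)) *\<^sub>R (g ^^ k) x = (1 / N ((f ^^ k) x)) *\<^sub>R (f ^^ k) x" for k
    using funpow_scaleR[of "1 / r" x k] r x is_norm_normalize_scaleR[OF norm(1)]
    by (simp add: g_def[abs_def])
  with tendsto_normalize[OF norm c(2) c(1)] show ?thesis by simp
qed

end

theorem theorem6p1:
  fixes f :: "real^'n \<Rightarrow> real^'n" and N :: "real^'n \<Rightarrow> real"
    and u :: "real^'n" and r :: real and D :: "real^'n \<Rightarrow> real^'n"
  assumes norm: "is_norm N"
    and maps: "\<And>x. x \<in> pos_cone \<Longrightarrow> f x \<in> pos_cone"
    and order_pres: "\<And>x y. x \<in> pos_cone \<Longrightarrow> y \<in> pos_cone \<Longrightarrow> (\<forall>i. x $ i \<le> y $ i)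
                       \<Longrightarrow> (\<forall>i. f x $ i \<le> f y $ i)"
    and homog: "\<And>x t. x \<in> pos_cone \<Longrightarrow> t > 0 \<Longrightarrow> f (t *\<^sub>R x) = t *\<^sub>R f x"
    and u_pos: "u \<in> pos_cone" and u_norm: "N u = 1" and u_eig: "f u = r *\<^sub>R u"
    and deriv: "(f has_derivative D) (at u)"
    and unique_final: "\<exists>!C. final_class (matrix D) C"
  shows "(\<forall>v \<in> pos_cone. (\<exists>\<mu>::real. f v = \<mu> *\<^sub>R v) \<longrightarrow> (\<exists>c::real. v = c *\<^sub>R u))
       \<and> ((\<forall>C. final_class (matrix D) C \<longrightarrow> primitive_class (matrix D) C) \<longrightarrow>
            (\<forall>x \<in> pos_cone. (\<lambda>k. (1 / N ((f ^^ k) x)) *\<^sub>R (f ^^ k) x) \<longlonglongrightarrow> u))"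
proof (intro conjI ballI impI)
  interpret f: order_preserving_homogeneous f
    using maps order_pres homog by unfold_locales (simp_all add: less_eq_vec_def)
  show "\<exists>c. v = c *\<^sub>R u" if "v \<in> pos_cone" "\<exists>\<mu>. f v = \<mu> *\<^sub>R v" for v
    using f.eigenvector_unique[OF u_pos u_eig deriv unique_final] that by blast
  fix x :: "real^'n" assume prim: "\<forall>C. final_class (matrix D) C \<longrightarrow> primitive_class (matrix D) C"
    and x: "x \<in> pos_cone"
  obtain j K where "\<And>i. (i, j) \<in> arcs (matrix D) ^^ K"
    using unique_primitive_final_class_common_target[OF unique_final prim] by blast
  from f.normalized_funpow_tendsto[OF norm u_norm u_pos u_eig deriv this x]
  show "(\<lambda>k. (1 / N ((f ^^ k) x)) *\<^sub>R (f ^^ k) x) \<longlonglongrightarrow> u" .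
qed

end
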